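(* Under the hypotheses and notation below, the generating function of bridges, counted by length (variable $t$) and abscissa of the endpoint (variable $x$, the abscissa being $\le 0$), is $$B(\bar x;t)=1-\sqrt{D\,\bar\Delta(\bar x)}.$$
   Context: $\mathcal H=\{(k,0):k\le0\}$; $A\subset\mathbb{Z}^2$ is finite, symmetric ($(i,j)\in A\Rightarrow(i,-j)\in A$), has small height variations ($|j|\le1$ for all $(i,j)\in A$), and $A_1\ne0$. A walk with steps in $A$ is a sequence $(w_0,\dots,w_n)$ with $w_m-w_{m-1}\in A$. A bridge is a walk of length $n\ge1$ with $w_0=(0,0)$, $w_n\in\mathcal H$, and $w_m\notin\mathcal H$ for $1\le m\le n-1$. Write $\bar x=1/x$, $A_0(x)=\sum_{(i,0)\in A}x^i$, $A_1(x)=\sum_{(i,1)\in A}x^i$, $\delta(x;t)=(1-tA_0(x))^2-4t^2A_1(x)^2$, and let $(D,\Delta(x),\bar\Delta(\bar x))$ be the canonical factorization of $\delta$: the unique triple of formal power series in $t$ with $\delta=D\Delta(x)\bar\Delta(\bar x)$, $D$ with real coefficients, $\Delta(x)$ with coefficients in $\mathbb{R}[x]$, $\bar\Delta(\bar x)$ with coefficients in $\mathbb{R}[\bar x]$, and $D(0)=\Delta(0;t)=\bar\Delta(0;t)=\Delta(x;0)=\bar\Delta(\bar x;0)=1$. The square root is the power series with constant term $1$. *)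

theory Defs
  imports "HOL-Computational_Algebra.Formal_Laurent_Series"
begin

text \<open>Series in t whose coefficients are (Laurent) polynomials in x are modelled as
  elements of type real fls fps: power series in t (fps_X) with coefficients formal
  Laurent series in x (fls_X); fls_X_intpow k is x^k, so x-bar^k is fls_X_intpow (-k).\<close>

definition halfline :: "(int \<times> int) set" where
  "halfline = {(k, 0) | k. k \<le> 0}"

definition is_walk :: "(int \<times> int) set \<Rightarrow> (int \<times> int) list \<Rightarrow> bool" where
  "is_walk A w \<longleftrightarrow> w \<noteq> [] \<and>
     (\<forall>m. 0 < m \<and> m < length w \<longrightarrow>
        (fst (w ! m) - fst (w ! (m - 1)), snd (w ! m) - snd (w ! (m - 1))) \<in> A)"

text \<open>Bridges of length n (a walk of length n is a list of n+1 points).\<close>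
definition bridges :: "(int \<times> int) set \<Rightarrow> nat \<Rightarrow> (int \<times> int) list set" where
  "bridges A n = {w. n \<ge> 1 \<and> length w = n + 1 \<and> is_walk A w \<and> w ! 0 = (0, 0) \<and>
      w ! n \<in> halfline \<and> (\<forall>m. 1 \<le> m \<and> m \<le> n - 1 \<longrightarrow> w ! m \<notin> halfline)}"

definition bridge_gf :: "(int \<times> int) set \<Rightarrow> real fls fps" where
  "bridge_gf A = Abs_fps (\<lambda>n. \<Sum>w\<in>bridges A n. fls_X_intpow (fst (w ! n)))"

definition A0 :: "(int \<times> int) set \<Rightarrow> real fls" where
  "A0 A = (\<Sum>p\<in>{p\<in>A. snd p = 0}. fls_X_intpow (fst p))"

definition A1 :: "(int \<times> int) set \<Rightarrow> real fls" where
  "A1 A = (\<Sum>p\<in>{p\<in>A. snd p = 1}. fls_X_intpow (fst p))"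

definition delta :: "(int \<times> int) set \<Rightarrow> real fls fps" where
  "delta A = (1 - fps_X * fps_const (A0 A))\<^sup>2 - 4 * fps_X\<^sup>2 * (fps_const (A1 A))\<^sup>2"

definition is_real_const :: "real fls \<Rightarrow> bool" where
  "is_real_const c \<longleftrightarrow> (\<forall>k. fls_nth c k \<noteq> 0 \<longrightarrow> k = 0)"

definition is_poly_x :: "real fls \<Rightarrow> bool" where
  "is_poly_x c \<longleftrightarrow> finite {k. fls_nth c k \<noteq> 0} \<and> (\<forall>k. fls_nth c k \<noteq> 0 \<longrightarrow> k \<ge> 0)"

definition is_poly_xbar :: "real fls \<Rightarrow> bool" where
  "is_poly_xbar c \<longleftrightarrow> finite {k. fls_nth c k \<noteq> 0} \<and> (\<forall>k. fls_nth c k \<noteq> 0 \<longrightarrow> k \<le> 0)"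

definition canonical_factorization ::
  "(int \<times> int) set \<Rightarrow> real fls fps \<Rightarrow> real fls fps \<Rightarrow> real fls fps \<Rightarrow> bool" where
  "canonical_factorization A D Dx Dxb \<longleftrightarrow>
     delta A = D * Dx * Dxb \<and>
     (\<forall>n. is_real_const (D $ n)) \<and> (\<forall>n. is_poly_x (Dx $ n)) \<and> (\<forall>n. is_poly_xbar (Dxb $ n)) \<and>
     D $ 0 = 1 \<and>
     (\<forall>n. fls_nth (Dx $ n) 0 = (if n = 0 then 1 else 0)) \<and>
     (\<forall>n. fls_nth (Dxb $ n) 0 = (if n = 0 then 1 else 0)) \<and>
     Dx $ 0 = 1 \<and> Dxb $ 0 = 1"

definition fps_sqrt1 :: "real fls fps \<Rightarrow> real fls fps" where
  "fps_sqrt1 f = (THE s. s $ 0 = 1 \<and> s\<^sup>2 = f)"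

end

theory Submission
  imports Defs "HOL-Library.Product_Plus"
begin

text \<open>Let \<open>F\<^sub>j\<close> count the walks that start at the origin and avoid \<open>\<H>\<close> after time 0,
  ending at height \<open>j\<close>. Removing the last step gives
  \<open>F\<^sub>j + [j = 0] B = [j = 0] + t (A\<^sub>0 F\<^sub>j + A\<^sub>1 F\<^sub>j\<^sub>-\<^sub>1 + A\<^sub>1 F\<^sub>j\<^sub>+\<^sub>1)\<close>, using the symmetry of \<open>A\<close>.
  For the root \<open>Y = t (A\<^sub>0 Y + A\<^sub>1 + A\<^sub>1 Y\<^sup>2)\<close> of the kernel, the equations for \<open>j \<noteq> 0\<close>
  force \<open>F\<^sub>j = Y\<^sup>|\<^sup>j\<^sup>| F\<^sub>0\<close>, and the equation at \<open>j = 0\<close> becomes \<open>F\<^sub>0 \<surd>\<delta> = 1 - B\<close>, so that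
  \<open>\<delta> F\<^sub>0\<^sup>2 = (1 - B)\<^sup>2\<close>. The coefficients of \<open>1 - B\<close> contain no positive powers of \<open>x\<close>,
  while \<open>F\<^sub>0 \<in> 1 + t x \<real>[[x]][[t]]\<close> since a walk at height 0 off \<open>\<H>\<close> has positive
  abscissa. Uniqueness of the canonical factorization \<open>\<delta> = D \<Delta> \<Delta>'\<close> therefore gives
  \<open>D \<Delta>' = (1 - B)\<^sup>2\<close>.\<close>

unbundle fps_syntax

section \<open>Supports of Laurent series\<close>

definition fls_supp :: "'a::zero fls \<Rightarrow> int set" where
  "fls_supp f = {k. f $$ k \<noteq> 0}"

lemma fls_supp_empty_iff [simp]: "fls_supp f = {} \<longleftrightarrow> f = 0"
  by (auto simp: fls_supp_def fls_eq_iff)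

lemma fls_supp_zero [simp]: "fls_supp 0 = {}"
  by simp

lemma fls_supp_one [simp]: "fls_supp (1 :: 'a::zero_neq_one fls) = {0}"
  by (auto simp: fls_supp_def)

lemma fls_supp_X_intpow [simp]: "fls_supp (fls_X_intpow i :: 'a::zero_neq_one fls) = {i}"
  by (auto simp: fls_supp_def)

lemma fls_supp_uminus [simp]: "fls_supp (- f) = fls_supp (f :: 'a::group_add fls)"
  by (simp add: fls_supp_def)

lemma fls_supp_add: "fls_supp (f + g) \<subseteq> fls_supp f \<union> fls_supp (g :: 'a::monoid_add fls)"
  by (auto simp: fls_supp_def)

lemma fls_supp_diff: "fls_supp (f - g) \<subseteq> fls_supp f \<union> fls_supp (g :: 'a::group_add fls)"
  by (auto simp: fls_supp_def)

lemma fls_supp_sum: "fls_supp (\<Sum>i\<in>I. f i) \<subseteq> (\<Union>i\<in>I. fls_supp (f i :: 'a::comm_monoid_add fls))"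
proof (induction I rule: infinite_finite_induct)
  case (insert i I)
  then show ?case
    using fls_supp_add[of "f i" "\<Sum>i\<in>I. f i"] by auto
qed simp_all

lemma fls_supp_mult:
  "fls_supp (f * g) \<subseteq> {i + j |i j. i \<in> fls_supp f \<and> j \<in> fls_supp (g :: 'a::comm_semiring_0 fls)}"
proof
  fix n assume "n \<in> fls_supp (f * g)"
  then have "(\<Sum>i = fls_subdegree f..n - fls_subdegree g. f $$ i * g $$ (n - i)) \<noteq> 0"
    by (simp add: fls_supp_def fls_times_nth(2))
  then obtain i where "f $$ i * g $$ (n - i) \<noteq> 0"
    by (meson sum.neutral)
  then have "i \<in> fls_supp f" "n - i \<in> fls_supp g"
    by (auto simp: fls_supp_def)
  then show "n \<in> {i + j |i j. i \<in> fls_supp f \<and> j \<in> fls_supp g}"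
    by force
qed

lemma fls_supp_fps_mult_nth:
  fixes f g :: "'a::comm_semiring_0 fls fps"
  shows
  "fls_supp ((f * g) $ n) \<subseteq>
     (\<Union>i\<le>n. {a + b |a b. a \<in> fls_supp (f $ i) \<and> b \<in> fls_supp (g $ (n - i :: nat))})"
  (is "_ \<subseteq> ?R")
proof -
  have "fls_supp ((f * g) $ n) \<subseteq> (\<Union>i\<in>{0..n}. fls_supp (f $ i * g $ (n - i)))"
    unfolding fps_mult_nth by (rule fls_supp_sum)
  also have "\<dots> \<subseteq> ?R"
    by (rule UN_mono) (auto dest!: subsetD[OF fls_supp_mult])
  finally show ?thesis .
qed

lemma fls_supp_fps_mult_nth_nonpos:
  assumes "\<And>n. fls_supp (f $ n) \<subseteq> {..0}" and "\<And>n. fls_supp (g $ n) \<subseteq> {..0}"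
  shows "fls_supp ((f * g) $ n :: 'a::comm_semiring_0 fls) \<subseteq> {..0}"
  using fls_supp_fps_mult_nth[of f g n] assms by fastforce

section \<open>Uniqueness of the canonical factorization\<close>

definition one_plus_pos_x :: "'a::comm_semiring_1 fls fps \<Rightarrow> bool" where
  "one_plus_pos_x U \<longleftrightarrow> U $ 0 = 1 \<and> (\<forall>n\<ge>1. fls_supp (U $ n) \<subseteq> {1..})"

lemma one_plus_pos_x_nth_0: "one_plus_pos_x U \<Longrightarrow> U $ 0 = 1"
  by (simp add: one_plus_pos_x_def)

lemma one_plus_pos_x_supp_pos: "one_plus_pos_x U \<Longrightarrow> n \<ge> 1 \<Longrightarrow> fls_supp (U $ n) \<subseteq> {1..}"
  by (simp add: one_plus_pos_x_def)

lemma one_plus_pos_x_supp: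
  assumes "one_plus_pos_x U"
  shows "fls_supp (U $ n) \<subseteq> {0..}"
proof (cases "n = 0")
  case True
  then show ?thesis
    using one_plus_pos_x_nth_0[OF assms] by simp
next
  case False
  then show ?thesis
    using one_plus_pos_x_supp_pos[OF assms, of n] by auto
qed

lemma one_plus_pos_x_one: "one_plus_pos_x 1"
  by (simp add: one_plus_pos_x_def)

lemma one_plus_pos_x_mult:
  assumes U: "one_plus_pos_x U" and V: "one_plus_pos_x V"
  shows "one_plus_pos_x (U * V)"
  unfolding one_plus_pos_x_def
proof (intro conjI allI impI)
  show "(U * V) $ 0 = 1"
    using U V by (simp add: one_plus_pos_x_def)
next
  fix n :: nat assume n: "n \<ge> 1"
  have "a + b \<ge> 1" if "i \<le> n" "a \<in> fls_supp (U $ i)" "b \<in> fls_supp (V $ (n - i))" for i a b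
  proof (cases "i \<ge> 1")
    case True
    then have "a \<ge> 1" "b \<ge> 0"
      using that one_plus_pos_x_supp_pos[OF U True] one_plus_pos_x_supp[OF V, of "n - i"] by auto
    then show ?thesis
      by simp
  next
    case False
    then have "n - i \<ge> 1"
      using n by simp
    then have "a \<ge> 0" "b \<ge> 1"
      using that one_plus_pos_x_supp_pos[OF V] one_plus_pos_x_supp[OF U, of i] by auto
    then show ?thesis
      by simp
  qed
  then show "fls_supp ((U * V) $ n) \<subseteq> {1..}"
    using fls_supp_fps_mult_nth[of U V n] by fastforce
qed

lemma fps_mult_nth_split:
  assumes "n > 0"
  shows "(f * g) $ n = f $ 0 * g $ n + f $ n * g $ 0 + (\<Sum>i\<in>{1..<n}. f $ i * g $ (n - i))"
proof -
  have "{0..n} = insert 0 (insert n {1..<n})"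
    using assms by auto
  then show ?thesis
    using assms by (simp add: fps_mult_nth add.assoc)
qed

text \<open>By induction on \<open>n\<close>, comparing coefficients of \<open>t\<^sup>n\<close> gives \<open>L\<^sub>n - R\<^sub>n = Q\<^sub>n - P\<^sub>n\<close>,
  whose support lies both in \<open>{..0}\<close> and in \<open>{1..}\<close>.\<close>
lemma factorization_unique:
  fixes L R P Q :: "'a::comm_ring_1 fls fps"
  assumes eq: "L * P = R * Q"
    and L: "\<And>n. fls_supp (L $ n) \<subseteq> {..0}" "L $ 0 = 1"
    and R: "\<And>n. fls_supp (R $ n) \<subseteq> {..0}" "R $ 0 = 1"
    and P: "one_plus_pos_x P" and Q: "one_plus_pos_x Q"
  shows "L = R"
proof -
  have "L $ n = R $ n \<and> P $ n = Q $ n" for n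
  proof (induction n rule: less_induct)
    case (less n)
    show ?case
    proof (cases "n = 0")
      case True
      then show ?thesis
        using L R P Q by (simp add: one_plus_pos_x_def)
    next
      case False
      have "(\<Sum>i\<in>{1..<n}. L $ i * P $ (n - i)) = (\<Sum>i\<in>{1..<n}. R $ i * Q $ (n - i))"
        using less by (intro sum.cong) auto
      moreover have "(L * P) $ n = (R * Q) $ n"
        using eq by simp
      ultimately have "L $ n + P $ n = R $ n + Q $ n"
        using False L R one_plus_pos_x_nth_0[OF P] one_plus_pos_x_nth_0[OF Q]
        by (simp add: fps_mult_nth_split add_ac)
      then have diff: "L $ n - R $ n = Q $ n - P $ n"
        by (simp add: algebra_simps)
      have "fls_supp (L $ n - R $ n) \<subseteq> {..0}"
        using fls_supp_diff L R by blast
      moreover have "fls_supp (Q $ n - P $ n) \<subseteq> {1..}"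
        using fls_supp_diff one_plus_pos_x_supp_pos[OF P] one_plus_pos_x_supp_pos[OF Q] False
        by (metis Un_least less_one not_less subset_trans)
      ultimately have "fls_supp (L $ n - R $ n) = {}"
        unfolding diff by fastforce
      then show ?thesis
        using diff by simp
    qed
  qed
  then show ?thesis
    by (simp add: fps_eq_iff)
qed

lemma fps_sqrt1_square:
  assumes "r $ 0 = 1"
  shows "fps_sqrt1 (r\<^sup>2) = r"
  unfolding fps_sqrt1_def
proof (rule the_equality)
  fix s
  assume s: "s $ 0 = 1 \<and> s\<^sup>2 = r\<^sup>2"
  then have "(s - r) * (s + r) = 0"
    by (simp add: power2_eq_square algebra_simps)
  moreover have "s + r \<noteq> 0"
    using s assms by (metis fps_add_nth fps_zero_nth one_add_one zero_neq_numeral)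
  ultimately show "s = r"
    by simp
qed (use assms in simp)

lemma canonical_factorization_one_plus_pos_x:
  assumes "canonical_factorization A D Dx Dxb"
  shows "one_plus_pos_x Dx"
  unfolding one_plus_pos_x_def
proof (intro conjI allI impI subsetI)
  show "Dx $ 0 = 1"
    using assms by (simp add: canonical_factorization_def)
next
  fix n k
  assume n: "n \<ge> 1" and k: "k \<in> fls_supp (Dx $ n)"
  then have "k \<ge> 0"
    using assms by (auto simp: canonical_factorization_def is_poly_x_def fls_supp_def)
  moreover have "k \<noteq> 0"
    using n k assms by (auto simp: canonical_factorization_def fls_supp_def)
  ultimately show "k \<in> {1..}"
    by simp
qed

lemma canonical_factorization_D_Dxb_eq:
  assumes cf: "canonical_factorization A D Dx Dxb"
    and eq: "delta A * P = L" and P: "one_plus_pos_x P"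
    and L: "\<And>n. fls_supp (L $ n) \<subseteq> {..0}" "L $ 0 = 1"
  shows "D * Dxb = L"
proof (rule factorization_unique)
  show "one_plus_pos_x (Dx * P)"
    using canonical_factorization_one_plus_pos_x[OF cf] P by (rule one_plus_pos_x_mult)
  show "D * Dxb * (Dx * P) = L * 1"
    using cf eq by (simp add: canonical_factorization_def algebra_simps)
  show "fls_supp ((D * Dxb) $ n) \<subseteq> {..0}" for n
    using cf unfolding canonical_factorization_def is_real_const_def is_poly_xbar_def
    by (intro fls_supp_fps_mult_nth_nonpos) (auto simp: fls_supp_def)
  show "(D * Dxb) $ 0 = 1"
    using cf by (simp add: canonical_factorization_def)
qed (use L one_plus_pos_x_one in auto)

section \<open>The kernel method\<close>

text \<open>The root \<open>Y\<close> of the kernel with \<open>Y(0) = 0\<close> is read off from \<open>S = 1 - t a - 2 t b Y\<close>.\<close>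
lemma kernel_root:
  fixes a b :: "'a::field_char_0" and S :: "'a fps"
  assumes b: "b \<noteq> 0" and S0: "S $ 0 = 1"
    and S2: "S\<^sup>2 = (1 - fps_X * fps_const a)\<^sup>2 - 4 * fps_X\<^sup>2 * (fps_const b)\<^sup>2"
  obtains Y where "Y = fps_X * (fps_const a * Y + fps_const b + fps_const b * Y\<^sup>2)"
    and "fps_X * (fps_const a + 2 * fps_const b * Y) = 1 - S"
proof -
  define N where "N = 1 - fps_X * fps_const a - S"
  have "N $ 0 = 0"
    using S0 by (simp add: N_def)
  then have XN: "fps_X * fps_shift 1 N = N"
    by (intro fps_ext) (simp add: fps_X_mult_nth)
  define Y where "Y = fps_shift 1 N * fps_const (inverse (2 * b))"
  have "2 * fps_X * fps_const b * Y
      = fps_X * fps_shift 1 N * (fps_const (2 * b) * fps_const (inverse (2 * b)))"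
    by (simp add: Y_def fps_const_mult[symmetric] algebra_simps del: fps_const_mult)
  also have "\<dots> = N"
    using b XN by simp
  finally have SY: "S = 1 - fps_X * fps_const a - 2 * fps_X * fps_const b * Y"
    by (simp add: N_def)
  define E where "E = Y - fps_X * (fps_const a * Y + fps_const b + fps_const b * Y\<^sup>2)"
  have "2 * (2 * fps_X * fps_const b) * E
      = (1 - fps_X * fps_const a)\<^sup>2 - 4 * fps_X\<^sup>2 * (fps_const b)\<^sup>2 - S\<^sup>2"
    unfolding E_def SY by (simp add: power2_eq_square algebra_simps del: fps_const_mult)
  also have "\<dots> = 0"
    using S2 by simp
  finally have "E = 0"
    using b by simp
  moreover have "fps_X * (fps_const a + 2 * fps_const b * Y) = 1 - S"
    using SY by (simp add: algebra_simps)
  ultimately show ?thesis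
    using that unfolding E_def by simp
qed

lemma kernel_recurrence_zero:
  fixes G :: "nat \<Rightarrow> 'a::comm_ring_1 fps"
  assumes G0: "G 0 = 0"
    and rec: "\<And>k. k \<ge> 1 \<Longrightarrow>
      G k = fps_X * (fps_const a * G k + fps_const b * G (k - 1) + fps_const b * G (k + 1))"
  shows "G k = 0"
proof -
  have "G k $ n = 0" for k n
  proof (induction n arbitrary: k)
    case 0
    show ?case
      by (cases "k = 0") (simp add: G0, subst rec, auto)
  next
    case (Suc n)
    show ?case
      by (cases "k = 0") (simp add: G0, subst rec, auto simp: Suc)
  qed
  then show ?thesis
    by (simp add: fps_eq_iff)
qed

lemma kernel_recurrence_solution:
  fixes G :: "nat \<Rightarrow> 'a::comm_ring_1 fps"
  assumes Y: "Y = fps_X * (fps_const a * Y + fps_const b + fps_const b * Y\<^sup>2)"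
    and rec: "\<And>k. k \<ge> 1 \<Longrightarrow>
      G k = fps_X * (fps_const a * G k + fps_const b * G (k - 1) + fps_const b * G (k + 1))"
  shows "G k = Y ^ k * G 0"
proof -
  have Y_rec: "Y ^ k * G 0 = fps_X * (fps_const a * (Y ^ k * G 0) + fps_const b * (Y ^ (k - 1) * G 0)
      + fps_const b * (Y ^ (k + 1) * G 0))" if k: "k \<ge> 1" for k
  proof -
    obtain m where m: "k = Suc m"
      using k Suc_le_D[of 0 k] by auto
    have "Y ^ k * G 0 = Y ^ m * G 0 * Y"
      using m by (simp add: algebra_simps)
    also have "\<dots> = Y ^ m * G 0 * (fps_X * (fps_const a * Y + fps_const b + fps_const b * Y\<^sup>2))"
      using arg_cong[where f = "\<lambda>z. Y ^ m * G 0 * z", OF Y] .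
    also have "\<dots> = fps_X * (fps_const a * (Y ^ Suc m * G 0) + fps_const b * (Y ^ m * G 0)
        + fps_const b * (Y ^ Suc (Suc m) * G 0))"
      by (simp add: algebra_simps power2_eq_square)
    finally show ?thesis
      using m by simp
  qed
  define H where "H j = G j - Y ^ j * G 0" for j
  have "H j = fps_X * (fps_const a * H j + fps_const b * H (j - 1) + fps_const b * H (j + 1))"
    if "j \<ge> 1" for j
    using rec[OF that] Y_rec[OF that] by (simp add: H_def algebra_simps)
  then have "H k = 0"
    by (rule kernel_recurrence_zero[rotated]) (simp_all add: H_def)
  then show ?thesis
    by (simp add: H_def)
qed

lemma kernel_recurrence_solution_int:
  fixes F :: "int \<Rightarrow> 'a::comm_ring_1 fps"
  assumes Y: "Y = fps_X * (fps_const a * Y + fps_const b + fps_const b * Y\<^sup>2)"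
    and rec: "\<And>j. j \<noteq> 0 \<Longrightarrow>
      F j = fps_X * (fps_const a * F j + fps_const b * F (j - 1) + fps_const b * F (j + 1))"
  shows "F (int k) = Y ^ k * F 0" and "F (- int k) = Y ^ k * F 0"
proof -
  have "F (int k) = Y ^ k * F (int 0)"
  proof (rule kernel_recurrence_solution[OF Y, where G = "\<lambda>k. F (int k)"])
    fix k :: nat
    assume k: "k \<ge> 1"
    show "F (int k) = fps_X * (fps_const a * F (int k) + fps_const b * F (int (k - 1))
        + fps_const b * F (int (k + 1)))"
      unfolding of_nat_diff[OF k] of_nat_add of_nat_1 using k by (intro rec) simp
  qed
  then show "F (int k) = Y ^ k * F 0"
    by simp
  have "F (- int k) = Y ^ k * F (- int 0)"
  proof (rule kernel_recurrence_solution[OF Y, where G = "\<lambda>k. F (- int k)"])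
    fix k :: nat
    assume k: "k \<ge> 1"
    have "- int (k - 1) = - int k + 1" "- int (k + 1) = - int k - 1"
      using k by simp_all
    moreover have "F (- int k) = fps_X * (fps_const a * F (- int k) + fps_const b * F (- int k - 1)
        + fps_const b * F (- int k + 1))"
      using k by (intro rec) simp
    ultimately show "F (- int k) = fps_X * (fps_const a * F (- int k) + fps_const b * F (- int (k - 1))
        + fps_const b * F (- int (k + 1)))"
      by (metis add.assoc add.commute)
  qed
  then show "F (- int k) = Y ^ k * F 0"
    by simp
qed

lemma kernel_method:
  fixes F :: "int \<Rightarrow> 'a::field_char_0 fps" and a b :: 'a
  assumes rec: "\<And>j. F j + (if j = 0 then B else 0) = (if j = 0 then 1 else 0)
      + fps_X * (fps_const a * F j + fps_const b * F (j - 1) + fps_const b * F (j + 1))"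
    and b: "b \<noteq> 0" and S0: "S $ 0 = 1"
    and S2: "S\<^sup>2 = (1 - fps_X * fps_const a)\<^sup>2 - 4 * fps_X\<^sup>2 * (fps_const b)\<^sup>2"
  shows "F 0 * S = 1 - B"
proof -
  obtain Y where Y: "Y = fps_X * (fps_const a * Y + fps_const b + fps_const b * Y\<^sup>2)"
    and YS: "fps_X * (fps_const a + 2 * fps_const b * Y) = 1 - S"
    using kernel_root[OF b S0 S2] .
  have "F j = fps_X * (fps_const a * F j + fps_const b * F (j - 1) + fps_const b * F (j + 1))"
    if "j \<noteq> 0" for j
  proof -
    have "F j = F j + (if j = 0 then B else 0)"
      using that by simp
    also note rec
    finally show ?thesis
      using that by simp
  qed
  then have "F 1 = Y * F 0" "F (- 1) = Y * F 0"
    using kernel_recurrence_solution_int[OF Y, of F, where k = 1] by simp_all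
  then have "F 0 + B = 1 + fps_X * (fps_const a + 2 * fps_const b * Y) * F 0"
    using rec[of 0] by (simp add: algebra_simps)
  then show ?thesis
    unfolding YS by (simp add: algebra_simps)
qed

section \<open>Walks avoiding the half-line\<close>

lemma is_walk_iff_steps:
  "is_walk A w \<longleftrightarrow> w \<noteq> [] \<and> (\<forall>m. 0 < m \<and> m < length w \<longrightarrow> w ! m - w ! (m - 1) \<in> A)"
  by (simp add: is_walk_def minus_prod_def)

lemma is_walk_snoc:
  assumes "w \<noteq> []"
  shows "is_walk A (w @ [p]) \<longleftrightarrow> is_walk A w \<and> p - last w \<in> A"
proof -
  have "(\<forall>m. 0 < m \<and> m < length (w @ [p]) \<longrightarrow> (w @ [p]) ! m - (w @ [p]) ! (m - 1) \<in> A)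
    \<longleftrightarrow> (\<forall>m. 0 < m \<and> m < length w \<longrightarrow> w ! m - w ! (m - 1) \<in> A) \<and> p - last w \<in> A"
    (is "?L \<longleftrightarrow> ?R")
  proof
    assume L: ?L
    have "p - last w \<in> A"
      using L[rule_format, of "length w"] assms by (simp add: nth_append last_conv_nth)
    moreover have "w ! m - w ! (m - 1) \<in> A" if "0 < m" "m < length w" for m
      using L[rule_format, of m] that by (simp add: nth_append less_imp_diff_less)
    ultimately show ?R
      by blast
  next
    assume R: ?R
    show ?L
    proof (intro allI impI)
      fix m
      assume m: "0 < m \<and> m < length (w @ [p])"
      show "(w @ [p]) ! m - (w @ [p]) ! (m - 1) \<in> A"
      proof (cases "m < length w")
        case True
        then show ?thesis
          using R m by (simp add: nth_append less_imp_diff_less)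
      next
        case False
        then have "m = length w"
          using m by simp
        then show ?thesis
          using R assms by (simp add: nth_append last_conv_nth)
      qed
    qed
  qed
  then show ?thesis
    using assms by (simp add: is_walk_iff_steps)
qed

definition avoiding_walks :: "(int \<times> int) set \<Rightarrow> nat \<Rightarrow> (int \<times> int) list set" where
  "avoiding_walks A n = {w. length w = Suc n \<and> is_walk A w \<and> w ! 0 = (0, 0) \<and>
      (\<forall>m. 1 \<le> m \<and> m \<le> n \<longrightarrow> w ! m \<notin> halfline)}"

definition extend_walk :: "(int \<times> int) list \<Rightarrow> int \<times> int \<Rightarrow> (int \<times> int) list" where
  "extend_walk w s = w @ [last w + s]"

lemma avoiding_walks_0: "avoiding_walks A 0 = {[(0, 0)]}"
proof -
  have "w \<in> avoiding_walks A 0 \<longleftrightarrow> w = [(0, 0)]" for w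
    by (cases w) (auto simp: avoiding_walks_def is_walk_def)
  then show ?thesis
    by auto
qed

lemma avoiding_walk_nonempty: "w \<in> avoiding_walks A n \<Longrightarrow> w \<noteq> []"
  by (auto simp: avoiding_walks_def)

lemma last_avoiding_walk: "w \<in> avoiding_walks A n \<Longrightarrow> last w = w ! n"
  using avoiding_walk_nonempty by (fastforce simp: avoiding_walks_def last_conv_nth)

lemma inj_extend_walk: "inj (\<lambda>(w, s). extend_walk w s)"
proof (rule injI)
  fix x y :: "(int \<times> int) list \<times> int \<times> int"
  assume "(\<lambda>(w, s). extend_walk w s) x = (\<lambda>(w, s). extend_walk w s) y"
  then have "fst x = fst y" "last (fst x) + snd x = last (fst y) + snd y"
    by (auto simp: extend_walk_def split: prod.splits)
  then show "x = y"
    by (simp add: prod_eq_iff)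
qed

lemma avoiding_walks_Suc_Un_bridges:
  "avoiding_walks A (Suc n) \<union> bridges A (Suc n) = {v. length v = Suc (Suc n) \<and> is_walk A v \<and>
      v ! 0 = (0, 0) \<and> (\<forall>m. 1 \<le> m \<and> m \<le> n \<longrightarrow> v ! m \<notin> halfline)}"
  (is "_ = {v. ?P v}")
proof -
  have upto_Suc: "(\<forall>m. 1 \<le> m \<and> m \<le> Suc n \<longrightarrow> Q m) \<longleftrightarrow> (\<forall>m. 1 \<le> m \<and> m \<le> n \<longrightarrow> Q m) \<and> Q (Suc n)"
    for Q :: "nat \<Rightarrow> bool"
    by (auto simp: le_Suc_eq)
  have "avoiding_walks A (Suc n) = {v. ?P v \<and> v ! Suc n \<notin> halfline}"
    unfolding avoiding_walks_def upto_Suc by auto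
  moreover have "bridges A (Suc n) = {v. ?P v \<and> v ! Suc n \<in> halfline}"
    unfolding bridges_def by auto
  ultimately show ?thesis
    by auto
qed

lemma extend_avoiding_walks:
  "(\<lambda>(w, s). extend_walk w s) ` (avoiding_walks A n \<times> A) = avoiding_walks A (Suc n) \<union> bridges A (Suc n)"
  unfolding avoiding_walks_Suc_Un_bridges
proof (intro equalityI subsetI)
  fix v
  assume "v \<in> (\<lambda>(w, s). extend_walk w s) ` (avoiding_walks A n \<times> A)"
  then obtain w s where w: "w \<in> avoiding_walks A n" and s: "s \<in> A" and v: "v = w @ [last w + s]"
    by (auto simp: extend_walk_def)
  have "length w = Suc n" "is_walk A w" "w ! 0 = (0, 0)" "\<forall>m. 1 \<le> m \<and> m \<le> n \<longrightarrow> w ! m \<notin> halfline"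
    using w by (simp_all add: avoiding_walks_def)
  moreover have "is_walk A v"
    using avoiding_walk_nonempty[OF w] is_walk_snoc[of w A "last w + s"] s \<open>is_walk A w\<close> v by simp
  ultimately show "v \<in> {v. length v = Suc (Suc n) \<and> is_walk A v \<and> v ! 0 = (0, 0) \<and>
      (\<forall>m. 1 \<le> m \<and> m \<le> n \<longrightarrow> v ! m \<notin> halfline)}"
    by (simp add: v nth_append)
next
  fix v
  assume "v \<in> {v. length v = Suc (Suc n) \<and> is_walk A v \<and> v ! 0 = (0, 0) \<and>
      (\<forall>m. 1 \<le> m \<and> m \<le> n \<longrightarrow> v ! m \<notin> halfline)}"
  then have lv: "length v = Suc (Suc n)" and "is_walk A v" and "v ! 0 = (0, 0)"
    and avoid: "\<forall>m. 1 \<le> m \<and> m \<le> n \<longrightarrow> v ! m \<notin> halfline"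
    by simp_all
  define w where "w = butlast v"
  define s where "s = last v - last w"
  have "v \<noteq> []"
    using lv by auto
  then have v: "v = w @ [last w + s]"
    by (simp add: w_def s_def)
  have lw: "length w = Suc n"
    using lv by (simp add: w_def)
  then have "w \<noteq> []"
    by auto
  moreover have "is_walk A (w @ [last w + s])"
    using \<open>is_walk A v\<close> by (simp flip: v)
  ultimately have "is_walk A w" "s \<in> A"
    using is_walk_snoc[of w A "last w + s"] by simp_all
  moreover have "w ! 0 = (0, 0)" "\<forall>m. 1 \<le> m \<and> m \<le> n \<longrightarrow> w ! m \<notin> halfline"
    using \<open>v ! 0 = (0, 0)\<close> avoid lw by (simp_all add: v nth_append)
  ultimately have "w \<in> avoiding_walks A n"
    using lw by (simp add: avoiding_walks_def)
  then show "v \<in> (\<lambda>(w, s). extend_walk w s) ` (avoiding_walks A n \<times> A)"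
    using \<open>s \<in> A\<close> by (intro image_eqI[of _ _ "(w, s)"]) (simp_all add: extend_walk_def v)
qed

lemma avoiding_walks_bridges_disjoint: "avoiding_walks A (Suc n) \<inter> bridges A (Suc n) = {}"
  by (auto simp: avoiding_walks_def bridges_def)

lemma finite_avoiding_walks:
  assumes "finite A"
  shows "finite (avoiding_walks A n)"
proof (induction n)
  case 0
  then show ?case
    by (simp add: avoiding_walks_0)
next
  case (Suc n)
  have "avoiding_walks A (Suc n) \<subseteq> (\<lambda>(w, s). extend_walk w s) ` (avoiding_walks A n \<times> A)"
    unfolding extend_avoiding_walks by blast
  moreover have "finite ((\<lambda>(w, s). extend_walk w s) ` (avoiding_walks A n \<times> A))"
    using Suc assms by simp
  ultimately show ?case
    by (rule finite_subset)
qed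

section \<open>Generating functions\<close>

definition level_monomial :: "int \<Rightarrow> int \<times> int \<Rightarrow> real fls" where
  "level_monomial j p = (if snd p = j then fls_X_intpow (fst p) else 0)"

lemma level_monomial_add:
  "level_monomial j (p + s) = fls_X_intpow (fst s) * level_monomial (j - snd s) p"
  by (auto simp: level_monomial_def fls_X_intpow_times_fls_X_intpow add.commute)

definition avoiding_gf :: "(int \<times> int) set \<Rightarrow> int \<Rightarrow> real fls fps" where
  "avoiding_gf A j = Abs_fps (\<lambda>n. \<Sum>w\<in>avoiding_walks A n. level_monomial j (last w))"

lemma bridge_endpoint:
  assumes "v \<in> bridges A n"
  shows "v ! n = last v" and "last v \<in> halfline"
proof -
  have "length v = Suc n"
    using assms by (simp add: bridges_def)
  then show "v ! n = last v"
    by (metis diff_Suc_1 last_conv_nth list.size(3) nat.distinct(1))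
  then show "last v \<in> halfline"
    using assms by (simp add: bridges_def)
qed

lemma bridge_gf_nth_conv_level_monomial:
  "(if j = 0 then bridge_gf A $ n else 0) = (\<Sum>v\<in>bridges A n. level_monomial j (last v))"
proof -
  have "snd (last v) = 0" if "v \<in> bridges A n" for v
    using bridge_endpoint(2)[OF that] by (auto simp: halfline_def)
  then show ?thesis
    by (auto simp: bridge_gf_def level_monomial_def bridge_endpoint(1) intro: sum.cong)
qed

lemma avoiding_gf_Suc:
  assumes "finite A"
  shows "avoiding_gf A j $ Suc n + (if j = 0 then bridge_gf A $ Suc n else 0)
    = (\<Sum>s\<in>A. fls_X_intpow (fst s) * avoiding_gf A (j - snd s) $ n)"
proof -
  let ?ext = "\<lambda>(w, s). extend_walk w s"
  have "finite (?ext ` (avoiding_walks A n \<times> A))"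
    using assms finite_avoiding_walks[OF assms] by simp
  then have fin: "finite (avoiding_walks A (Suc n))" "finite (bridges A (Suc n))"
    unfolding extend_avoiding_walks by simp_all
  have "avoiding_gf A j $ Suc n + (if j = 0 then bridge_gf A $ Suc n else 0)
      = (\<Sum>v\<in>avoiding_walks A (Suc n) \<union> bridges A (Suc n). level_monomial j (last v))"
    using fin avoiding_walks_bridges_disjoint
    by (simp add: avoiding_gf_def bridge_gf_nth_conv_level_monomial sum.union_disjoint)
  also have "\<dots> = (\<Sum>(w, s)\<in>avoiding_walks A n \<times> A. level_monomial j (last w + s))"
    unfolding extend_avoiding_walks[symmetric]
    by (subst sum.reindex) (auto intro: inj_on_subset[OF inj_extend_walk] sum.cong simp: extend_walk_def)
  also have "\<dots> = (\<Sum>s\<in>A. \<Sum>w\<in>avoiding_walks A n. level_monomial j (last w + s))"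
    by (simp add: sum.cartesian_product[symmetric] sum.swap[of _ A])
  also have "\<dots> = (\<Sum>s\<in>A. fls_X_intpow (fst s) * avoiding_gf A (j - snd s) $ n)"
    by (simp add: level_monomial_add avoiding_gf_def sum_distrib_left)
  finally show ?thesis .
qed

lemma sum_down_steps_eq_A1:
  assumes "\<And>i j. (i, j) \<in> A \<Longrightarrow> (i, - j) \<in> A"
  shows "(\<Sum>p\<in>{p\<in>A. snd p = -1}. fls_X_intpow (fst p)) = A1 A"
  unfolding A1_def
  by (rule sum.reindex_bij_witness[where i = "\<lambda>(i, j). (i, - j)" and j = "\<lambda>(i, j). (i, - j)"])
    (auto dest: assms)

lemma sum_steps_by_height:
  fixes g :: "int \<Rightarrow> real fls"
  assumes fin: "finite A" and sym: "\<And>i j. (i, j) \<in> A \<Longrightarrow> (i, - j) \<in> A"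
    and height: "\<And>i j. (i, j) \<in> A \<Longrightarrow> \<bar>j\<bar> \<le> 1"
  shows "(\<Sum>s\<in>A. fls_X_intpow (fst s) * g (j - snd s))
    = A0 A * g j + A1 A * g (j - 1) + A1 A * g (j + 1)"
proof -
  define f where "f s = fls_X_intpow (fst s) * g (j - snd s)" for s :: "int \<times> int"
  have "f s = (if snd s = 0 then f s else 0) + (if snd s = 1 then f s else 0)
      + (if snd s = -1 then f s else 0)" if "s \<in> A" for s
    using height[of "fst s" "snd s"] that by auto
  then have "(\<Sum>s\<in>A. f s) = (\<Sum>s\<in>{s\<in>A. snd s = 0}. f s) + (\<Sum>s\<in>{s\<in>A. snd s = 1}. f s)
      + (\<Sum>s\<in>{s\<in>A. snd s = -1}. f s)"
    using fin by (simp add: sum.inter_filter sum.distrib[symmetric] cong: sum.cong)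
  also have "(\<Sum>s\<in>{s\<in>A. snd s = 0}. f s) = A0 A * g j"
    unfolding A0_def sum_distrib_right by (intro sum.cong) (auto simp: f_def)
  also have "(\<Sum>s\<in>{s\<in>A. snd s = 1}. f s) = A1 A * g (j - 1)"
    unfolding A1_def sum_distrib_right by (intro sum.cong) (auto simp: f_def)
  also have "(\<Sum>s\<in>{s\<in>A. snd s = -1}. f s) = (\<Sum>p\<in>{p\<in>A. snd p = -1}. fls_X_intpow (fst p)) * g (j + 1)"
    unfolding sum_distrib_right by (intro sum.cong) (auto simp: f_def)
  also have "\<dots> = A1 A * g (j + 1)"
    by (simp add: sum_down_steps_eq_A1[OF sym])
  finally show ?thesis
    by (simp add: f_def)
qed

lemma avoiding_gf_equation:
  assumes "finite A" and "\<And>i j. (i, j) \<in> A \<Longrightarrow> (i, - j) \<in> A"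
    and "\<And>i j. (i, j) \<in> A \<Longrightarrow> \<bar>j\<bar> \<le> 1"
  shows "avoiding_gf A j + (if j = 0 then bridge_gf A else 0) = (if j = 0 then 1 else 0)
    + fps_X * (fps_const (A0 A) * avoiding_gf A j + fps_const (A1 A) * avoiding_gf A (j - 1)
      + fps_const (A1 A) * avoiding_gf A (j + 1))"
proof (rule fps_ext)
  fix n
  show "(avoiding_gf A j + (if j = 0 then bridge_gf A else 0)) $ n = ((if j = 0 then 1 else 0)
    + fps_X * (fps_const (A0 A) * avoiding_gf A j + fps_const (A1 A) * avoiding_gf A (j - 1)
      + fps_const (A1 A) * avoiding_gf A (j + 1))) $ n"
  proof (cases n)
    case 0
    then show ?thesis
      by (simp add: avoiding_gf_def avoiding_walks_0 level_monomial_def bridge_gf_def bridges_def)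
  next
    case (Suc m)
    have "avoiding_gf A j $ Suc m + (if j = 0 then bridge_gf A $ Suc m else 0)
      = A0 A * avoiding_gf A j $ m + A1 A * avoiding_gf A (j - 1) $ m + A1 A * avoiding_gf A (j + 1) $ m"
      unfolding avoiding_gf_Suc[OF assms(1)] by (rule sum_steps_by_height[OF assms])
    then show ?thesis
      using Suc by (cases "j = 0") simp_all
  qed
qed

lemma bridge_gf_nth_0: "bridge_gf A $ 0 = 0"
  by (simp add: bridge_gf_def bridges_def)

lemma bridge_gf_supp: "fls_supp (bridge_gf A $ n) \<subseteq> {..0}"
proof -
  have "fls_supp (bridge_gf A $ n) \<subseteq> (\<Union>v\<in>bridges A n. fls_supp (fls_X_intpow (fst (v ! n)) :: real fls))"
    unfolding bridge_gf_def fps_nth_Abs_fps by (rule fls_supp_sum)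
  also have "\<dots> \<subseteq> {..0}"
  proof (intro UN_least)
    fix v
    assume "v \<in> bridges A n"
    then have "fst (v ! n) \<le> 0"
      using bridge_endpoint by (force simp: halfline_def)
    then show "fls_supp (fls_X_intpow (fst (v ! n)) :: real fls) \<subseteq> {..0}"
      by simp
  qed
  finally show ?thesis .
qed

lemma one_plus_pos_x_avoiding_gf: "one_plus_pos_x (avoiding_gf A 0)"
  unfolding one_plus_pos_x_def
proof (intro conjI allI impI)
  show "avoiding_gf A 0 $ 0 = 1"
    by (simp add: avoiding_gf_def avoiding_walks_0 level_monomial_def)
next
  fix n :: nat
  assume n: "n \<ge> 1"
  have "fls_supp (avoiding_gf A 0 $ n) \<subseteq> (\<Union>w\<in>avoiding_walks A n. fls_supp (level_monomial 0 (last w)))"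
    unfolding avoiding_gf_def fps_nth_Abs_fps by (rule fls_supp_sum)
  also have "\<dots> \<subseteq> {1..}"
  proof (intro UN_least)
    fix w
    assume w: "w \<in> avoiding_walks A n"
    then have "last w \<notin> halfline"
      using n by (simp add: avoiding_walks_def last_avoiding_walk[OF w])
    then show "fls_supp (level_monomial 0 (last w)) \<subseteq> {1..}"
      by (cases "last w") (auto simp: level_monomial_def halfline_def)
  qed
  finally show "fls_supp (avoiding_gf A 0 $ n) \<subseteq> {1..}" .
qed

lemma one_minus_bridge_gf_square:
  shows "fls_supp (((1 - bridge_gf A)\<^sup>2) $ n) \<subseteq> {..0}" and "((1 - bridge_gf A)\<^sup>2) $ 0 = 1"
proof -
  have "fls_supp ((1 - bridge_gf A) $ n) \<subseteq> {..0}" for n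
    by (cases "n = 0") (simp_all add: bridge_gf_nth_0 bridge_gf_supp)
  then show "fls_supp (((1 - bridge_gf A)\<^sup>2) $ n) \<subseteq> {..0}"
    unfolding power2_eq_square by (intro fls_supp_fps_mult_nth_nonpos)
  show "((1 - bridge_gf A)\<^sup>2) $ 0 = 1"
    by (simp add: power2_eq_square bridge_gf_nth_0)
qed

lemma delta_mult_avoiding_gf_square:
  assumes "finite A" and "\<And>i j. (i, j) \<in> A \<Longrightarrow> (i, - j) \<in> A"
    and "\<And>i j. (i, j) \<in> A \<Longrightarrow> \<bar>j\<bar> \<le> 1" and "A1 A \<noteq> 0"
  shows "delta A * (avoiding_gf A 0)\<^sup>2 = (1 - bridge_gf A)\<^sup>2"
proof -
  define S where "S = fps_radical (\<lambda>_ _. 1) 2 (delta A)"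
  have "delta A $ 0 = 1"
    by (simp add: delta_def power2_eq_square)
  then have S: "S $ 0 = 1" "S\<^sup>2 = delta A"
    using power_radical[of "delta A" "\<lambda>_ _. 1" 1] by (simp_all add: S_def numeral_2_eq_2)
  have "avoiding_gf A 0 * S = 1 - bridge_gf A"
    using kernel_method[OF avoiding_gf_equation[OF assms(1-3)] assms(4) S(1)] S(2)
    by (simp add: delta_def)
  then show ?thesis
    unfolding S(2)[symmetric] by (metis power_mult_distrib mult.commute)
qed

theorem mainTheorem5:
  fixes A :: "(int \<times> int) set" and D Dx Dxb :: "real fls fps"
  assumes "finite A"
    and "\<And>i j. (i, j) \<in> A \<Longrightarrow> (i, - j) \<in> A"
    and "\<And>i j. (i, j) \<in> A \<Longrightarrow> \<bar>j\<bar> \<le> 1"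
    and "A1 A \<noteq> 0"
    and "canonical_factorization A D Dx Dxb"
  shows "bridge_gf A = 1 - fps_sqrt1 (D * Dxb)"
proof -
  have "delta A * (avoiding_gf A 0)\<^sup>2 = (1 - bridge_gf A)\<^sup>2"
    using assms(1-4) by (rule delta_mult_avoiding_gf_square)
  moreover have "one_plus_pos_x ((avoiding_gf A 0)\<^sup>2)"
    unfolding power2_eq_square by (intro one_plus_pos_x_mult one_plus_pos_x_avoiding_gf)
  ultimately have "D * Dxb = (1 - bridge_gf A)\<^sup>2"
    using canonical_factorization_D_Dxb_eq[OF assms(5)] one_minus_bridge_gf_square by blast
  then show ?thesis
    by (simp add: fps_sqrt1_square bridge_gf_nth_0)
qed

end
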